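(* Let $a>0$ and $b>0$, and equip $\mathrm{Diff}(S^1)$, $S^1=\mathbb{R}/\mathbb{Z}$, with the right-invariant Riemannian metric given at the identity by $$\langle\!\langle u,v\rangle\!\rangle_{H^1}=\int_0^1\big(a\,uv+b\,u_xv_x\big)\,dx$$ for vector fields $u,v$ on $S^1$ (identified with periodic functions). Then for all $u,v\in T_e\mathrm{Diff}(S^1)$, $$S(u,v):=\langle\!\langle R(u,v)v,u\rangle\!\rangle_{H^1}=\langle\!\langle \Gamma(u,v),\Gamma(u,v)\rangle\!\rangle_{H^1}-\langle\!\langle \Gamma(u,u),\Gamma(v,v)\rangle\!\rangle_{H^1},$$ where $$\Gamma(u,v)=A^{-1}\partial_x\Big(a\,uv+\tfrac{b}{2}u_xv_x\Big),\qquad A=a-b\,\partial_x^2 .$$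
   Context: $R$ denotes the Riemann curvature tensor of the Levi-Civita connection of the given right-invariant metric, evaluated at the identity $e$; $T_e\mathrm{Diff}(S^1)$ is the space of smooth vector fields on $S^1$. $S(u,v)$ is the non-normalized sectional curvature. *)

theory Defs
  imports "HOL-Analysis.Analysis"
begin

text \<open>Smooth vector fields on S^1 = R/Z, identified with smooth 1-periodic
  real functions: this is T_e Diff(S^1).\<close>
definition smooth_periodic :: "(real \<Rightarrow> real) \<Rightarrow> bool" where
  "smooth_periodic f \<longleftrightarrow> (\<forall>x. f (x + 1) = f x) \<and>
     (\<forall>n x. ((deriv ^^ n) f) differentiable (at x))"

definition VF :: "(real \<Rightarrow> real) set" where
  "VF = {f. smooth_periodic f}"

definition ipH1 :: "real \<Rightarrow> real \<Rightarrow> (real \<Rightarrow> real) \<Rightarrow> (real \<Rightarrow> real) \<Rightarrow> real" where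
  "ipH1 a b u v = integral {0..1} (\<lambda>x. a * u x * v x + b * deriv u x * deriv v x)"

text \<open>Bracket of the right-invariant vector fields generated by u and v:
  [X_u, X_v] = X_(brk u v), with brk u v = u v_x - u_x v.\<close>
definition brk :: "(real \<Rightarrow> real) \<Rightarrow> (real \<Rightarrow> real) \<Rightarrow> real \<Rightarrow> real" where
  "brk u v = (\<lambda>x. u x * deriv v x - deriv u x * v x)"

definition coad :: "real \<Rightarrow> real \<Rightarrow> (real \<Rightarrow> real) \<Rightarrow> (real \<Rightarrow> real) \<Rightarrow> real \<Rightarrow> real" where
  "coad a b u v = (THE w. w \<in> VF \<and> (\<forall>z\<in>VF. ipH1 a b w z = ipH1 a b v (brk u z)))"

text \<open>Levi-Civita connection of the right-invariant metric on right-invariant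
  vector fields (Koszul formula), evaluated at the identity.\<close>
definition conn :: "real \<Rightarrow> real \<Rightarrow> (real \<Rightarrow> real) \<Rightarrow> (real \<Rightarrow> real) \<Rightarrow> real \<Rightarrow> real" where
  "conn a b u v = (\<lambda>x. (brk u v x - coad a b u v x - coad a b v u x) / 2)"

definition curv :: "real \<Rightarrow> real \<Rightarrow> (real \<Rightarrow> real) \<Rightarrow> (real \<Rightarrow> real) \<Rightarrow> (real \<Rightarrow> real) \<Rightarrow> real \<Rightarrow> real" where
  "curv a b u v w = (\<lambda>x. conn a b u (conn a b v w) x - conn a b v (conn a b u w) x
                          - conn a b (brk u v) w x)"

definition Ainv :: "real \<Rightarrow> real \<Rightarrow> (real \<Rightarrow> real) \<Rightarrow> real \<Rightarrow> real" where
  "Ainv a b f = (THE g. g \<in> VF \<and> (\<forall>x. a * g x - b * deriv (deriv g) x = f x))"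

definition Gam :: "real \<Rightarrow> real \<Rightarrow> (real \<Rightarrow> real) \<Rightarrow> (real \<Rightarrow> real) \<Rightarrow> real \<Rightarrow> real" where
  "Gam a b u v = Ainv a b (deriv (\<lambda>x. a * u x * v x + b / 2 * deriv u x * deriv v x))"

end

theory Submission
  imports Defs
begin

text \<open>The inertia operator
  \<open>A = a - b \<partial>\<^sub>x\<^sup>2\<close> is invertible on them (variation of constants, with the free constants fixed
  by periodicity), and \<open>\<langle>\<langle>f, z\<rangle>\<rangle> = \<integral> (A f) z\<close> after integrating by parts. Hence the coadjoint
  operator is \<open>A\<^sup>-\<^sup>1\<close> of the \<open>L\<^sup>2\<close>-transpose of the bracket, and the Koszul formula gives
  \<open>\<nabla>\<^sub>u v = u v\<^sub>x + \<Gamma>(u,v)\<close>. Expanding \<open>\<langle>\<langle>R(u,v)v, u\<rangle>\<rangle>\<close> with this formula and comparing with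
  the right-hand side, the difference of the two integrands is, once \<open>\<Gamma>''\<close> is eliminated via
  \<open>A \<Gamma>(p,q) = \<partial>\<^sub>x(a p q + b/2 p\<^sub>x q\<^sub>x)\<close>, the derivative of an explicit periodic function.\<close>

definition differentiable_upto :: "nat \<Rightarrow> (real \<Rightarrow> real) \<Rightarrow> bool" where
  "differentiable_upto n f \<longleftrightarrow> (\<forall>m<n. \<forall>x. (deriv ^^ m) f differentiable (at x))"

definition smooth :: "(real \<Rightarrow> real) \<Rightarrow> bool" where
  "smooth f \<longleftrightarrow> (\<forall>n x. (deriv ^^ n) f differentiable (at x))"

definition periodic :: "(real \<Rightarrow> real) \<Rightarrow> bool" where
  "periodic f \<longleftrightarrow> (\<forall>x. f (x + 1) = f x)"

lemma VF_iff: "f \<in> VF \<longleftrightarrow> smooth f \<and> periodic f"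
  by (auto simp: VF_def smooth_periodic_def smooth_def periodic_def)

lemma smooth_iff_differentiable_upto: "smooth f \<longleftrightarrow> (\<forall>n. differentiable_upto n f)"
  unfolding smooth_def differentiable_upto_def by (meson lessI)

lemma differentiable_upto_0 [simp]: "differentiable_upto 0 f"
  by (simp add: differentiable_upto_def)

lemma differentiable_upto_Suc:
  "differentiable_upto (Suc n) f \<longleftrightarrow> (\<forall>x. f differentiable (at x)) \<and> differentiable_upto n (deriv f)"
  unfolding differentiable_upto_def All_less_Suc2 funpow_Suc_right by simp

lemma differentiable_upto_SucD: "differentiable_upto (Suc n) f \<Longrightarrow> differentiable_upto n f"
  unfolding differentiable_upto_def by simp

lemma field_differentiable_if_differentiable:
  "(f :: real \<Rightarrow> real) differentiable (at x) \<Longrightarrow> f field_differentiable (at x)"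
  by (metis DERIV_deriv_iff_field_differentiable DERIV_deriv_iff_real_differentiable)

lemma differentiable_upto_const: "differentiable_upto n (\<lambda>x. c)"
  by (induction n arbitrary: c) (simp_all add: differentiable_upto_Suc)

lemma differentiable_upto_add:
  "differentiable_upto n f \<Longrightarrow> differentiable_upto n g \<Longrightarrow> differentiable_upto n (\<lambda>x. f x + g x)"
proof (induction n arbitrary: f g)
  case (Suc n)
  then have "\<And>x. f differentiable (at x)" "\<And>x. g differentiable (at x)"
    by (simp_all add: differentiable_upto_Suc)
  then have "deriv (\<lambda>x. f x + g x) = (\<lambda>x. deriv f x + deriv g x)"
    by (simp add: fun_eq_iff field_differentiable_if_differentiable)
  with Suc show ?case by (simp add: differentiable_upto_Suc)
qed simp

lemma differentiable_upto_mult: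
  "differentiable_upto n f \<Longrightarrow> differentiable_upto n g \<Longrightarrow> differentiable_upto n (\<lambda>x. f x * g x)"
proof (induction n arbitrary: f g)
  case (Suc n)
  then have "\<And>x. f differentiable (at x)" "\<And>x. g differentiable (at x)"
    by (simp_all add: differentiable_upto_Suc)
  then have "deriv (\<lambda>x. f x * g x) = (\<lambda>x. f x * deriv g x + deriv f x * g x)"
    by (simp add: fun_eq_iff field_differentiable_if_differentiable)
  moreover have "differentiable_upto n (\<lambda>x. f x * deriv g x + deriv f x * g x)"
    using Suc.prems differentiable_upto_SucD[OF Suc.prems(1)] differentiable_upto_SucD[OF Suc.prems(2)]
    by (intro differentiable_upto_add Suc.IH) (simp_all add: differentiable_upto_Suc)
  ultimately show ?case using Suc.prems by (simp add: differentiable_upto_Suc)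
qed simp

lemma smooth_const [simp]: "smooth (\<lambda>x. c)"
  by (simp add: smooth_iff_differentiable_upto differentiable_upto_const)

lemma smooth_add [simp]: "smooth f \<Longrightarrow> smooth g \<Longrightarrow> smooth (\<lambda>x. f x + g x)"
  by (simp add: smooth_iff_differentiable_upto differentiable_upto_add)

lemma smooth_mult [simp]: "smooth f \<Longrightarrow> smooth g \<Longrightarrow> smooth (\<lambda>x. f x * g x)"
  by (simp add: smooth_iff_differentiable_upto differentiable_upto_mult)

lemma smooth_minus [simp]: "smooth f \<Longrightarrow> smooth (\<lambda>x. - f x)"
  using smooth_mult[of "\<lambda>x. - 1" f] by simp

lemma smooth_diff [simp]: "smooth f \<Longrightarrow> smooth g \<Longrightarrow> smooth (\<lambda>x. f x - g x)"
  using smooth_add[of f "\<lambda>x. - g x"] by simp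

lemma smooth_divide [simp]: "smooth f \<Longrightarrow> smooth (\<lambda>x. f x / c)"
  using smooth_mult[of f "\<lambda>x. inverse c"] by (simp add: divide_inverse)

lemma smooth_deriv [simp]: "smooth f \<Longrightarrow> smooth (deriv f)"
  by (meson differentiable_upto_Suc smooth_iff_differentiable_upto)

lemma smooth_differentiable [simp]: "smooth f \<Longrightarrow> f differentiable (at x)"
  using smooth_def[of f] by (metis funpow_0)

lemma smooth_field_differentiable [simp]: "smooth f \<Longrightarrow> f field_differentiable (at x)"
  by (simp add: field_differentiable_if_differentiable)

lemma smooth_has_real_derivative: "smooth f \<Longrightarrow> (f has_real_derivative deriv f x) (at x)"
  by (simp add: DERIV_deriv_iff_real_differentiable)

lemma smooth_isCont [simp]: "smooth f \<Longrightarrow> isCont f x"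
  by (simp add: differentiable_imp_continuous_within)

lemma smooth_integrable [simp]: "smooth f \<Longrightarrow> f integrable_on {a..b}"
  by (simp add: continuous_at_imp_continuous_on integrable_continuous_real)

lemma smooth_if_second_derivative_affine:
  assumes g: "\<And>x. (g has_real_derivative g1 x) (at x)"
    and g1: "\<And>x. (g1 has_real_derivative c * g x + \<phi> x) (at x)"
    and "smooth \<phi>"
  shows "smooth g"
proof -
  have deriv_g: "deriv g = g1" and deriv_g1: "deriv g1 = (\<lambda>x. c * g x + \<phi> x)"
    using g g1 by (simp_all add: DERIV_imp_deriv fun_eq_iff)
  have "\<And>x. g differentiable (at x)" "\<And>x. g1 differentiable (at x)"
    using g g1 real_differentiable_def by blast+
  then have "differentiable_upto n g \<and> differentiable_upto n g1" for n
  proof (induction n)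
    case (Suc n)
    moreover have "differentiable_upto n (\<lambda>x. c * g x + \<phi> x)"
      using Suc \<open>smooth \<phi>\<close>
      by (intro differentiable_upto_add differentiable_upto_mult differentiable_upto_const)
        (auto simp: smooth_iff_differentiable_upto)
    ultimately show ?case by (simp add: differentiable_upto_Suc deriv_g deriv_g1)
  qed simp
  then show ?thesis by (simp add: smooth_iff_differentiable_upto)
qed

lemma periodic_const [simp]: "periodic (\<lambda>x. c)"
  and periodic_add [simp]: "periodic f \<Longrightarrow> periodic g \<Longrightarrow> periodic (\<lambda>x. f x + g x)"
  and periodic_diff [simp]: "periodic f \<Longrightarrow> periodic g \<Longrightarrow> periodic (\<lambda>x. f x - g x)"
  and periodic_mult [simp]: "periodic f \<Longrightarrow> periodic g \<Longrightarrow> periodic (\<lambda>x. f x * g x)"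
  and periodic_minus [simp]: "periodic f \<Longrightarrow> periodic (\<lambda>x. - f x)"
  and periodic_divide [simp]: "periodic f \<Longrightarrow> periodic (\<lambda>x. f x / c)"
  by (simp_all add: periodic_def)

lemma periodic_deriv [simp]:
  assumes "periodic f" "smooth f"
  shows "periodic (deriv f)"
  unfolding periodic_def
proof
  fix x
  have "((\<lambda>y. f (y + 1)) has_real_derivative deriv f (x + 1) * 1) (at x)"
    by (rule DERIV_chain2[where f = f])
      (auto simp: assms smooth_has_real_derivative intro!: derivative_eq_intros)
  moreover have "(\<lambda>y. f (y + 1)) = f"
    using assms(1) by (simp add: periodic_def)
  ultimately show "deriv f (x + 1) = deriv f x"
    by (simp add: DERIV_imp_deriv)
qed

lemma periodic_add_of_int:
  assumes "periodic f"
  shows "f (x + of_int n) = f x"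
proof (induction n rule: int_induct[where k = 0])
  case (step1 i)
  then show ?case
    using assms unfolding periodic_def by (metis add.assoc of_int_add of_int_1)
next
  case (step2 i)
  then show ?case
    using assms unfolding periodic_def by (metis diff_add_cancel add.assoc of_int_1 of_int_diff)
qed simp

lemma periodic_eq_0_if_eq_0_on_unit_interval:
  assumes "periodic f" "\<And>x. x \<in> {0..1} \<Longrightarrow> f x = 0"
  shows "f x = 0"
proof -
  have "f x = f (x - of_int \<lfloor>x\<rfloor>)"
    using periodic_add_of_int[OF assms(1), of "x - of_int \<lfloor>x\<rfloor>" "\<lfloor>x\<rfloor>"] by simp
  also have "\<dots> = 0"
    by (rule assms(2)) (simp add: floor_le_iff le_floor_iff, linarith)
  finally show ?thesis .
qed

lemma periodic_antiderivative_has_integral_0: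
  assumes "smooth F" "periodic F" "\<And>x. deriv F x = f x"
  shows "(f has_integral 0) {0..1}"
proof -
  have "(deriv F has_integral F 1 - F 0) {0..1}"
    by (intro fundamental_theorem_of_calculus)
      (auto simp: has_real_derivative_iff_has_vector_derivative[symmetric]
        intro!: has_field_derivative_at_within smooth_has_real_derivative assms(1))
  moreover have "F 1 = F 0" "deriv F = f"
    using assms(2,3) unfolding periodic_def by (metis add_0, blast)
  ultimately show ?thesis by simp
qed

lemma integral_eq_if_periodic_antiderivative:
  assumes "smooth f" "smooth g" "smooth F" "periodic F" "\<And>x. deriv F x = f x - g x"
  shows "integral {0..1} f = integral {0..1} g"
proof -
  have "integral {0..1} (\<lambda>x. f x - g x) = 0"
    using periodic_antiderivative_has_integral_0[OF assms(3-5)] by (rule integral_unique)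
  then show ?thesis
    using assms(1,2) by (simp add: integral_diff)
qed

lemma integral_by_parts_periodic:
  assumes "smooth f" "periodic f" "smooth g" "periodic g"
  shows "integral {0..1} (\<lambda>x. deriv f x * g x) = - integral {0..1} (\<lambda>x. f x * deriv g x)"
proof -
  have "integral {0..1} (\<lambda>x. deriv f x * g x) = integral {0..1} (\<lambda>x. - (f x * deriv g x))"
    by (rule integral_eq_if_periodic_antiderivative[where F = "\<lambda>x. f x * g x"])
      (use assms in \<open>simp_all add: algebra_simps\<close>)
  then show ?thesis by simp
qed

lemma continuous_has_antiderivative:
  assumes "\<And>x. isCont f x"
  obtains F where "\<And>x. (F has_real_derivative f x) (at x)"
  using einterval_antiderivative[of "-\<infinity>" "\<infinity>" f] assms
  by (auto simp: has_real_derivative_iff_has_vector_derivative)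

text \<open>Antiderivatives of \<open>exp (l x) \<psi> x\<close> differ by constants; as \<open>exp l \<noteq> 1\<close>, the constant can be
  chosen so that the antiderivative is quasi-periodic with multiplier \<open>exp l\<close>.\<close>
lemma twisted_periodic_antiderivative:
  fixes l :: real
  assumes "l \<noteq> 0" "\<And>x. isCont \<psi> x" "periodic \<psi>"
  obtains E where "\<And>x. (E has_real_derivative exp (l * x) * \<psi> x) (at x)"
    and "\<And>x. E (x + 1) = exp l * E x"
proof -
  obtain P where P: "\<And>x. (P has_real_derivative exp (l * x) * \<psi> x) (at x)"
    by (rule continuous_has_antiderivative[of "\<lambda>x. exp (l * x) * \<psi> x"])
      (use assms(2) in \<open>auto intro!: continuous_intros\<close>)
  define c where "c = P 1 - exp l * P 0"
  have shift: "P (x + 1) - exp l * P x = c" for x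
  proof -
    have "((\<lambda>x. P (x + 1) - exp l * P x) has_real_derivative 0) (at y)" for y
    proof -
      have "((\<lambda>x. P (x + 1)) has_real_derivative exp (l * (y + 1)) * \<psi> (y + 1) * 1) (at y)"
        by (rule DERIV_chain2[OF P]) (auto intro!: derivative_eq_intros)
      from DERIV_diff[OF this DERIV_cmult[where c = "exp l", OF P]]
      show ?thesis
        using assms(3) by (simp add: periodic_def distrib_left exp_add mult_ac)
    qed
    from DERIV_isconst_all[OF allI[OF this], of x 0] show ?thesis by (simp add: c_def)
  qed
  have "exp l \<noteq> 1" using assms(1) by simp
  show ?thesis
  proof (rule that[of "\<lambda>x. P x + c / (exp l - 1)"])
    show "((\<lambda>x. P x + c / (exp l - 1)) has_real_derivative exp (l * x) * \<psi> x) (at x)" for x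
      using P[of x] by (auto intro!: derivative_eq_intros)
    show "P (x + 1) + c / (exp l - 1) = exp l * (P x + c / (exp l - 1))" for x
      using shift[of x] \<open>exp l \<noteq> 1\<close> by (simp add: field_simps)
  qed
qed

subsection \<open>The \<open>H\<^sup>1\<close> inner product and the inertia operator\<close>

definition inertia :: "real \<Rightarrow> real \<Rightarrow> (real \<Rightarrow> real) \<Rightarrow> real \<Rightarrow> real" where
  "inertia a b g = (\<lambda>x. a * g x - b * deriv (deriv g) x)"

lemma smooth_inertia [simp]: "smooth g \<Longrightarrow> smooth (inertia a b g)"
  and periodic_inertia [simp]: "smooth g \<Longrightarrow> periodic g \<Longrightarrow> periodic (inertia a b g)"
  by (simp_all add: inertia_def)

lemma ipH1_inertia:
  assumes "smooth g" "periodic g" "smooth z" "periodic z"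
  shows "ipH1 a b g z = integral {0..1} (\<lambda>x. inertia a b g x * z x)"
  unfolding ipH1_def inertia_def
  by (rule integral_eq_if_periodic_antiderivative[where F = "\<lambda>x. b * deriv g x * z x"])
    (use assms in \<open>simp_all add: algebra_simps\<close>)

lemma ipH1_add:
  assumes "smooth f" "smooth g" "smooth z"
  shows "ipH1 a b (\<lambda>x. f x + g x) z = ipH1 a b f z + ipH1 a b g z"
proof -
  have "ipH1 a b (\<lambda>x. f x + g x) z = integral {0..1}
      (\<lambda>x. (a * f x * z x + b * deriv f x * deriv z x) + (a * g x * z x + b * deriv g x * deriv z x))"
    unfolding ipH1_def using assms by (simp add: algebra_simps)
  then show ?thesis
    unfolding ipH1_def using assms by (simp add: integral_add)
qed

lemma ipH1_diff:
  assumes "smooth f" "smooth g" "smooth z"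
  shows "ipH1 a b (\<lambda>x. f x - g x) z = ipH1 a b f z - ipH1 a b g z"
proof -
  have "ipH1 a b (\<lambda>x. f x - g x) z = integral {0..1}
      (\<lambda>x. (a * f x * z x + b * deriv f x * deriv z x) - (a * g x * z x + b * deriv g x * deriv z x))"
    unfolding ipH1_def using assms by (simp add: algebra_simps)
  then show ?thesis
    unfolding ipH1_def using assms by (simp add: integral_diff)
qed

lemma ipH1_divide:
  assumes "smooth f" "smooth z"
  shows "ipH1 a b (\<lambda>x. f x / c) z = ipH1 a b f z / c"
proof -
  have "ipH1 a b (\<lambda>x. f x / c) z = integral {0..1} (\<lambda>x. (a * f x * z x + b * deriv f x * deriv z x) / c)"
    unfolding ipH1_def using assms
    by (simp add: divide_inverse algebra_simps flip: times_divide_eq_right)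
  then show ?thesis
    unfolding ipH1_def by simp
qed

lemma ipH1_self_eq_0D:
  assumes "a > 0" "b > 0" "smooth d" "periodic d" "ipH1 a b d d = 0"
  shows "d x = 0"
proof -
  let ?h = "\<lambda>x. a * d x * d x + b * deriv d x * deriv d x"
  have nonneg: "a * d x * d x \<ge> 0" "b * deriv d x * deriv d x \<ge> 0" for x
    using assms(1,2) by (simp_all add: mult.assoc)
  have "continuous_on {0..1} ?h"
    using assms(3) by (intro continuous_at_imp_continuous_on ballI smooth_isCont) simp
  then have "\<forall>x\<in>{0..1}. ?h x = 0"
    using integral_eq_0_iff[of 0 1 ?h] nonneg assms(5) by (simp add: ipH1_def add_nonneg_nonneg)
  then have "\<And>x. x \<in> {0..1} \<Longrightarrow> d x = 0"
    using nonneg assms(1) by (metis add_nonneg_eq_0_iff mult_eq_0_iff less_numeral_extra(3))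
  then show ?thesis
    by (rule periodic_eq_0_if_eq_0_on_unit_interval[OF assms(4)])
qed

lemma eq_if_ipH1_eq:
  assumes "a > 0" "b > 0" "smooth f" "periodic f" "smooth g" "periodic g"
    and "\<And>z. smooth z \<Longrightarrow> periodic z \<Longrightarrow> ipH1 a b f z = ipH1 a b g z"
  shows "f = g"
proof
  fix x
  define d where "d = (\<lambda>x. f x - g x)"
  have "smooth d" "periodic d"
    using assms(3-6) by (simp_all add: d_def)
  then have "ipH1 a b d d = 0"
    using assms(3,5,7) by (simp add: d_def ipH1_diff)
  then have "d x = 0"
    using ipH1_self_eq_0D assms(1,2) \<open>smooth d\<close> \<open>periodic d\<close> by blast
  then show "f x = g x" by (simp add: d_def)
qed

lemma inertia_inj:
  assumes "a > 0" "b > 0" "smooth g" "periodic g" "smooth h" "periodic h"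
    and "inertia a b g = inertia a b h"
  shows "g = h"
  by (rule eq_if_ipH1_eq[OF assms(1,2)]) (use assms in \<open>simp_all add: ipH1_inertia\<close>)

text \<open>Variation of constants with \<open>k = sqrt (a / b)\<close>: \<open>g x = exp (k x) E\<^sub>1 x + exp (-k x) E\<^sub>2 x\<close>,
  where \<open>E\<^sub>1, E\<^sub>2\<close> are multiplied by \<open>exp (-k), exp k\<close> over a period, which makes \<open>g\<close> periodic.\<close>
lemma inertia_surj:
  assumes "a > 0" "b > 0" "smooth f" "periodic f"
  obtains g where "smooth g" "periodic g" "inertia a b g = f"
proof -
  define k where "k = sqrt (a / b)"
  have k: "k > 0" and bk: "b * k\<^sup>2 = a"
    using assms(1,2) by (simp_all add: k_def)
  define \<phi> where "\<phi> = (\<lambda>x. - (1 / b) * f x)"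
  have "smooth \<phi>" "periodic \<phi>"
    unfolding \<phi>_def by (intro smooth_mult periodic_mult smooth_const periodic_const assms(3,4))+
  obtain E1 where E1: "\<And>x. (E1 has_real_derivative exp (- k * x) * (\<phi> x / (2 * k))) (at x)"
    and E1_shift: "\<And>x. E1 (x + 1) = exp (- k) * E1 x"
    by (rule twisted_periodic_antiderivative[of "- k" "\<lambda>x. \<phi> x / (2 * k)"])
      (use k \<open>smooth \<phi>\<close> \<open>periodic \<phi>\<close> in \<open>auto simp: periodic_def intro!: continuous_intros\<close>)
  obtain E2 where E2: "\<And>x. (E2 has_real_derivative exp (k * x) * (- \<phi> x / (2 * k))) (at x)"
    and E2_shift: "\<And>x. E2 (x + 1) = exp k * E2 x"
    by (rule twisted_periodic_antiderivative[of k "\<lambda>x. - \<phi> x / (2 * k)"])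
      (use k \<open>smooth \<phi>\<close> \<open>periodic \<phi>\<close> in \<open>auto simp: periodic_def intro!: continuous_intros\<close>)
  define g where "g = (\<lambda>x. exp (k * x) * E1 x + exp (- k * x) * E2 x)"
  define g1 where "g1 = (\<lambda>x. k * exp (k * x) * E1 x - k * exp (- k * x) * E2 x)"
  have exp_cancel: "exp (k * x) * exp (- (k * x)) = 1" for x
    by (simp add: mult_exp_exp)
  have g: "(g has_real_derivative g1 x) (at x)" for x
    unfolding g_def g1_def using k
    by (auto intro!: derivative_eq_intros E1 E2 simp: field_simps exp_cancel)
  have g1: "(g1 has_real_derivative k\<^sup>2 * g x + \<phi> x) (at x)" for x
    unfolding g_def g1_def using k
    by (auto intro!: derivative_eq_intros E1 E2 simp: field_simps exp_cancel power2_eq_square)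
  show ?thesis
  proof
    show "smooth g"
      using smooth_if_second_derivative_affine[OF g g1 \<open>smooth \<phi>\<close>] .
    show "periodic g"
      unfolding periodic_def g_def E1_shift E2_shift
      by (simp add: distrib_left mult_exp_exp algebra_simps flip: exp_add)
    have "deriv g = g1"
      using g by (simp add: DERIV_imp_deriv fun_eq_iff)
    then have "deriv (deriv g) x = k\<^sup>2 * g x + \<phi> x" for x
      using g1 by (simp add: DERIV_imp_deriv)
    then show "inertia a b g = f"
      using assms(2) unfolding inertia_def \<phi>_def by (simp add: fun_eq_iff field_simps flip: bk)
  qed
qed

lemma Ainv_eqI:
  assumes "a > 0" "b > 0" "smooth g" "periodic g" "inertia a b g = f"
  shows "Ainv a b f = g"
  unfolding Ainv_def
proof (rule the_equality)
  show "g \<in> VF \<and> (\<forall>x. a * g x - b * deriv (deriv g) x = f x)"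
    using assms(3-5) by (auto simp: VF_iff inertia_def)
next
  fix h
  assume "h \<in> VF \<and> (\<forall>x. a * h x - b * deriv (deriv h) x = f x)"
  then have "smooth h" "periodic h" "inertia a b h = inertia a b g"
    using assms(5) by (auto simp: VF_iff inertia_def)
  then show "h = g"
    using inertia_inj assms(1-4) by blast
qed

lemma
  assumes "a > 0" "b > 0" "smooth f" "periodic f"
  shows smooth_Ainv: "smooth (Ainv a b f)"
    and periodic_Ainv: "periodic (Ainv a b f)"
    and inertia_Ainv: "inertia a b (Ainv a b f) = f"
proof -
  obtain g where g: "smooth g" "periodic g" "inertia a b g = f"
    using inertia_surj[OF assms] .
  then have "Ainv a b f = g"
    using Ainv_eqI assms(1,2) by blast
  with g show "smooth (Ainv a b f)" "periodic (Ainv a b f)" "inertia a b (Ainv a b f) = f"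
    by simp_all
qed

lemma ipH1_Ainv:
  assumes "a > 0" "b > 0" "smooth f" "periodic f" "smooth z" "periodic z"
  shows "ipH1 a b (Ainv a b f) z = integral {0..1} (\<lambda>x. f x * z x)"
  using assms by (simp add: ipH1_inertia smooth_Ainv periodic_Ainv inertia_Ainv)

subsection \<open>The Christoffel operator \<open>\<Gamma>\<close>\<close>

definition Gam_potential :: "real \<Rightarrow> real \<Rightarrow> (real \<Rightarrow> real) \<Rightarrow> (real \<Rightarrow> real) \<Rightarrow> real \<Rightarrow> real" where
  "Gam_potential a b p q = (\<lambda>x. a * p x * q x + b / 2 * deriv p x * deriv q x)"

lemma Gam_eq_Ainv: "Gam a b p q = Ainv a b (deriv (Gam_potential a b p q))"
  by (simp add: Gam_def Gam_potential_def)

lemma smooth_Gam_potential [simp]: "smooth p \<Longrightarrow> smooth q \<Longrightarrow> smooth (Gam_potential a b p q)"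
  and periodic_Gam_potential [simp]:
    "smooth p \<Longrightarrow> periodic p \<Longrightarrow> smooth q \<Longrightarrow> periodic q \<Longrightarrow> periodic (Gam_potential a b p q)"
  by (simp_all add: Gam_potential_def)

lemma
  assumes "a > 0" "b > 0" "smooth p" "periodic p" "smooth q" "periodic q"
  shows smooth_Gam: "smooth (Gam a b p q)"
    and periodic_Gam: "periodic (Gam a b p q)"
    and deriv2_Gam:
      "deriv (deriv (Gam a b p q)) x = (a * Gam a b p q x - deriv (Gam_potential a b p q) x) / b"
proof -
  note Ainv = smooth_Ainv periodic_Ainv inertia_Ainv
  show "smooth (Gam a b p q)" "periodic (Gam a b p q)"
    unfolding Gam_eq_Ainv using assms by (simp_all add: Ainv)
  have "inertia a b (Gam a b p q) x = deriv (Gam_potential a b p q) x"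
    unfolding Gam_eq_Ainv using assms by (simp add: Ainv)
  then show "deriv (deriv (Gam a b p q)) x = (a * Gam a b p q x - deriv (Gam_potential a b p q) x) / b"
    using assms(2) by (simp add: inertia_def field_simps)
qed

lemma ipH1_Gam:
  assumes "a > 0" "b > 0" "smooth p" "periodic p" "smooth q" "periodic q" "smooth z" "periodic z"
  shows "ipH1 a b (Gam a b p q) z = - integral {0..1} (\<lambda>x. Gam_potential a b p q x * deriv z x)"
  unfolding Gam_eq_Ainv using assms
  by (simp add: ipH1_Ainv integral_by_parts_periodic)

subsection \<open>The coadjoint operator and the Levi-Civita connection\<close>

lemma smooth_brk [simp]: "smooth u \<Longrightarrow> smooth v \<Longrightarrow> smooth (brk u v)"
  and periodic_brk [simp]:
    "smooth u \<Longrightarrow> periodic u \<Longrightarrow> smooth v \<Longrightarrow> periodic v \<Longrightarrow> periodic (brk u v)"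
  by (simp_all add: brk_def)

text \<open>The momentum \<open>A (coad u v)\<close>: the \<open>L\<^sup>2\<close>-transpose of \<open>brk u\<close> applied to \<open>A v\<close>.\<close>
definition coad_momentum :: "real \<Rightarrow> real \<Rightarrow> (real \<Rightarrow> real) \<Rightarrow> (real \<Rightarrow> real) \<Rightarrow> real \<Rightarrow> real" where
  "coad_momentum a b u v = (\<lambda>x. - (2 * deriv u x * inertia a b v x + u x * deriv (inertia a b v) x))"

lemma smooth_coad_momentum [simp]: "smooth u \<Longrightarrow> smooth v \<Longrightarrow> smooth (coad_momentum a b u v)"
  and periodic_coad_momentum [simp]:
    "smooth u \<Longrightarrow> periodic u \<Longrightarrow> smooth v \<Longrightarrow> periodic v \<Longrightarrow> periodic (coad_momentum a b u v)"
  by (simp_all add: coad_momentum_def)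

lemma ipH1_Ainv_coad_momentum:
  assumes "a > 0" "b > 0" "smooth u" "periodic u" "smooth v" "periodic v" "smooth z" "periodic z"
  shows "ipH1 a b (Ainv a b (coad_momentum a b u v)) z = ipH1 a b v (brk u z)"
proof -
  have "ipH1 a b (Ainv a b (coad_momentum a b u v)) z
      = integral {0..1} (\<lambda>x. coad_momentum a b u v x * z x)"
    using assms by (simp add: ipH1_Ainv)
  also have "\<dots> = integral {0..1} (\<lambda>x. inertia a b v x * brk u z x)"
    by (rule integral_eq_if_periodic_antiderivative[where F = "\<lambda>x. - (u x * inertia a b v x * z x)"])
      (use assms in \<open>simp_all add: coad_momentum_def brk_def algebra_simps\<close>)
  also have "\<dots> = ipH1 a b v (brk u z)"
    using assms by (simp add: ipH1_inertia)
  finally show ?thesis .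
qed

lemma coad_eq_Ainv:
  assumes "a > 0" "b > 0" "smooth u" "periodic u" "smooth v" "periodic v"
  shows "coad a b u v = Ainv a b (coad_momentum a b u v)"
  unfolding coad_def
proof (rule the_equality)
  show "Ainv a b (coad_momentum a b u v) \<in> VF \<and>
      (\<forall>z\<in>VF. ipH1 a b (Ainv a b (coad_momentum a b u v)) z = ipH1 a b v (brk u z))"
    using assms by (simp add: VF_iff smooth_Ainv periodic_Ainv ipH1_Ainv_coad_momentum)
next
  fix w
  assume w: "w \<in> VF \<and> (\<forall>z\<in>VF. ipH1 a b w z = ipH1 a b v (brk u z))"
  show "w = Ainv a b (coad_momentum a b u v)"
    by (rule eq_if_ipH1_eq[OF assms(1,2)])
      (use w assms in \<open>simp_all add: VF_iff smooth_Ainv periodic_Ainv ipH1_Ainv_coad_momentum\<close>)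
qed

lemma
  assumes "a > 0" "b > 0" "smooth u" "periodic u" "smooth v" "periodic v"
  shows smooth_coad: "smooth (coad a b u v)"
    and periodic_coad: "periodic (coad a b u v)"
    and ipH1_coad: "smooth z \<Longrightarrow> periodic z \<Longrightarrow> ipH1 a b (coad a b u v) z = ipH1 a b v (brk u z)"
  using assms by (simp_all add: coad_eq_Ainv smooth_Ainv periodic_Ainv ipH1_Ainv_coad_momentum)

lemma ipH1_conn_Koszul:
  assumes "a > 0" "b > 0" "smooth u" "periodic u" "smooth v" "periodic v" "smooth z" "periodic z"
  shows "ipH1 a b (conn a b u v) z
    = (ipH1 a b (brk u v) z - ipH1 a b v (brk u z) - ipH1 a b u (brk v z)) / 2"
  unfolding conn_def using assms
  by (simp add: ipH1_divide ipH1_diff ipH1_coad smooth_coad)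

definition conn_integrand ::
  "real \<Rightarrow> real \<Rightarrow> (real \<Rightarrow> real) \<Rightarrow> (real \<Rightarrow> real) \<Rightarrow> (real \<Rightarrow> real) \<Rightarrow> real \<Rightarrow> real" where
  "conn_integrand a b p q z = (\<lambda>x. a * (p x * deriv q x) * z x
     + b * deriv (\<lambda>x. p x * deriv q x) x * deriv z x - Gam_potential a b p q x * deriv z x)"

lemma smooth_conn_integrand [simp]:
  "smooth p \<Longrightarrow> smooth q \<Longrightarrow> smooth z \<Longrightarrow> smooth (conn_integrand a b p q z)"
  by (simp add: conn_integrand_def)

lemma ipH1_mult_deriv_plus_Gam:
  assumes "a > 0" "b > 0" "smooth p" "periodic p" "smooth q" "periodic q" "smooth z" "periodic z"
  shows "ipH1 a b (\<lambda>x. p x * deriv q x + Gam a b p q x) z = integral {0..1} (conn_integrand a b p q z)"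
  using assms
  by (simp add: ipH1_add ipH1_Gam smooth_Gam conn_integrand_def integral_diff)
    (simp add: ipH1_def)

lemma conn_eq:
  assumes "a > 0" "b > 0" "smooth u" "periodic u" "smooth v" "periodic v"
  shows "conn a b u v = (\<lambda>x. u x * deriv v x + Gam a b u v x)"
proof (rule eq_if_ipH1_eq[OF assms(1,2)])
  show "smooth (conn a b u v)" "periodic (conn a b u v)"
    using assms by (simp_all add: conn_def smooth_coad periodic_coad)
  show "smooth (\<lambda>x. u x * deriv v x + Gam a b u v x)" "periodic (\<lambda>x. u x * deriv v x + Gam a b u v x)"
    using assms by (simp_all add: smooth_Gam periodic_Gam)
  fix z
  assume z: "smooth z" "periodic z"
  have "ipH1 a b (conn a b u v) z
      = (ipH1 a b (brk u v) z - ipH1 a b v (brk u z) - ipH1 a b u (brk v z)) / 2"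
    by (rule ipH1_conn_Koszul[OF assms z])
  also have "\<dots> = integral {0..1} (\<lambda>x.
      ((a * brk u v x * z x + b * deriv (brk u v) x * deriv z x)
       - (a * v x * brk u z x + b * deriv v x * deriv (brk u z) x)
       - (a * u x * brk v z x + b * deriv u x * deriv (brk v z) x)) / 2)"
    using assms z by (simp add: ipH1_def integral_diff)
  also have "\<dots> = integral {0..1} (conn_integrand a b u v z)"
    by (rule integral_eq_if_periodic_antiderivative[where F = "\<lambda>x.
        b / 2 * (deriv u x * deriv v x * z x - u x * deriv v x * deriv z x - deriv u x * v x * deriv z x)"])
      (use assms z in \<open>simp_all add: conn_integrand_def Gam_potential_def brk_def
        algebra_simps add_divide_distrib diff_divide_distrib\<close>)
  also have "\<dots> = ipH1 a b (\<lambda>x. u x * deriv v x + Gam a b u v x) z"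
    using assms z by (simp add: ipH1_mult_deriv_plus_Gam)
  finally show "ipH1 a b (conn a b u v) z = ipH1 a b (\<lambda>x. u x * deriv v x + Gam a b u v x) z" .
qed

lemma
  assumes "a > 0" "b > 0" "smooth u" "periodic u" "smooth v" "periodic v"
  shows smooth_conn: "smooth (conn a b u v)"
    and periodic_conn: "periodic (conn a b u v)"
  using assms by (simp_all add: conn_eq smooth_Gam periodic_Gam)

lemma ipH1_conn:
  assumes "a > 0" "b > 0" "smooth p" "periodic p" "smooth q" "periodic q" "smooth z" "periodic z"
  shows "ipH1 a b (conn a b p q) z = integral {0..1} (conn_integrand a b p q z)"
  using assms by (simp add: conn_eq ipH1_mult_deriv_plus_Gam)

subsection \<open>Sectional curvature\<close>

lemma ipH1_curv:
  assumes "a > 0" "b > 0" "smooth u" "periodic u" "smooth v" "periodic v"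
  shows "ipH1 a b (curv a b u v v) u = integral {0..1} (\<lambda>x.
    conn_integrand a b u (conn a b v v) u x - conn_integrand a b v (conn a b u v) u x
    - conn_integrand a b (brk u v) v u x)"
  using assms
  by (simp add: curv_def ipH1_diff ipH1_conn smooth_conn periodic_conn integral_diff)

theorem lemma6p1:
  fixes a b :: real and u v :: "real \<Rightarrow> real"
  assumes "a > 0" and "b > 0" and "u \<in> VF" and "v \<in> VF"
  shows "ipH1 a b (curv a b u v v) u =
           ipH1 a b (Gam a b u v) (Gam a b u v) - ipH1 a b (Gam a b u u) (Gam a b v v)"
proof -
  have uv: "smooth u" "periodic u" "smooth v" "periodic v"
    using assms(3,4) by (simp_all add: VF_iff)
  note Gam = smooth_Gam[OF assms(1,2)] periodic_Gam[OF assms(1,2)] deriv2_Gam[OF assms(1,2)]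
  let ?G1 = "Gam a b u u" and ?G2 = "Gam a b u v" and ?G3 = "Gam a b v v"
  have "ipH1 a b (curv a b u v v) u = integral {0..1} (\<lambda>x.
    conn_integrand a b u (conn a b v v) u x - conn_integrand a b v (conn a b u v) u x
    - conn_integrand a b (brk u v) v u x)"
    using assms(1,2) uv by (rule ipH1_curv)
  also have "\<dots> = integral {0..1} (\<lambda>x. (a * ?G2 x * ?G2 x + b * deriv ?G2 x * deriv ?G2 x)
      - (a * ?G1 x * ?G3 x + b * deriv ?G1 x * deriv ?G3 x))"
    by (rule integral_eq_if_periodic_antiderivative[where F = "\<lambda>x.
        a * ?G3 x * u x * u x - a * ?G2 x * u x * v x + b * deriv ?G1 x * ?G3 x - b * ?G2 x * deriv ?G2 x
        - b / 2 * ?G2 x * deriv u x * deriv v x + b / 2 * ?G3 x * deriv u x * deriv u x"])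
      (use assms(1,2) uv in \<open>simp_all add: Gam conn_eq conn_integrand_def Gam_potential_def
        brk_def field_simps\<close>)
  also have "\<dots> = ipH1 a b ?G2 ?G2 - ipH1 a b ?G1 ?G3"
    using uv by (simp add: Gam ipH1_def integral_diff)
  finally show ?thesis .
qed

end
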